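(* Let $\tau\ge1$. If Weighted Majority Rule 1 selects $P$ over $Q$, then $SC(P)\le SC(Q)+2\,SC(Z)$ for every point $Z$ of the metric space.
   Context: Voters $N=\{1,\dots,n\}$ and candidates are points of an arbitrary metric space $(X,d)$. Voter $i$ prefers $P$ to $Q$ only if $d(i,P)\le d(i,Q)$, with preference strength $\alpha_i^{PQ}=d(i,Q)/d(i,P)\ge1$. $SC(Y)=\sum_{i\in N}d(i,Y)$ for any $Y\in X$. For candidates $P,Q$ and threshold $\tau$, let $A_2$ ($A_1$) be the voters preferring $P$ with strength $>\tau$ ($\le\tau$), and $B_2$ ($B_1$) those preferring $Q$ with strength $>\tau$ ($\le\tau$). Weighted Majority Rule 1: if $\tau\ge\sqrt2+1$, weight $\frac{\tau+1}{\tau-1}$ for strength $>\tau$ and weight $1$ for strength $\le\tau$; if $\tau<\sqrt2+1$, weight $\tau$ for strength $>\tau$ and weight $1$ for strength $\le\tau$. It selects $P$ over $Q$ when the total weight of voters preferring $P$ is at least that of voters preferring $Q$. *)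

theory Defs
  imports Complex_Main "HOL-Library.Extended_Real"
begin

text \<open>Points of an arbitrary metric space are elements of a type of class metric_space,
  with d = dist. Voters are indexed by {1..n}; voter i sits at location loc i.\<close>

definition SC :: "nat \<Rightarrow> (nat \<Rightarrow> 'a::metric_space) \<Rightarrow> 'a \<Rightarrow> real" where
  "SC n loc Y = (\<Sum>i\<in>{1..n}. dist (loc i) Y)"

definition strength :: "'a::metric_space \<Rightarrow> 'a \<Rightarrow> 'a \<Rightarrow> ereal" where
  "strength x A B =
     (if dist x A = 0 then (if dist x B = 0 then 1 else \<infinity>)
      else ereal (dist x B / dist x A))"

definition wmr1_strong_weight :: "real \<Rightarrow> real" where
  "wmr1_strong_weight \<tau> = (if \<tau> \<ge> sqrt 2 + 1 then (\<tau> + 1) / (\<tau> - 1) else \<tau>)"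

definition wmr1_weight :: "real \<Rightarrow> 'a::metric_space \<Rightarrow> 'a \<Rightarrow> 'a \<Rightarrow> real" where
  "wmr1_weight \<tau> x A B = (if strength x A B > ereal \<tau> then wmr1_strong_weight \<tau> else 1)"

text \<open>Preference profile: prefP i means voter i prefers P (otherwise Q);
  consistency with the metric.\<close>
definition consistent_profile ::
  "nat \<Rightarrow> (nat \<Rightarrow> 'a::metric_space) \<Rightarrow> (nat \<Rightarrow> bool) \<Rightarrow> 'a \<Rightarrow> 'a \<Rightarrow> bool" where
  "consistent_profile n loc prefP P Q \<longleftrightarrow>
     (\<forall>i\<in>{1..n}. (prefP i \<longrightarrow> dist (loc i) P \<le> dist (loc i) Q) \<and>
                  (\<not> prefP i \<longrightarrow> dist (loc i) Q \<le> dist (loc i) P))"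

definition wmr1_selects ::
  "real \<Rightarrow> nat \<Rightarrow> (nat \<Rightarrow> 'a::metric_space) \<Rightarrow> (nat \<Rightarrow> bool) \<Rightarrow> 'a \<Rightarrow> 'a \<Rightarrow> bool" where
  "wmr1_selects \<tau> n loc prefP P Q \<longleftrightarrow>
     (\<Sum>i\<in>{i\<in>{1..n}. \<not> prefP i}. wmr1_weight \<tau> (loc i) Q P)
       \<le> (\<Sum>i\<in>{i\<in>{1..n}. prefP i}. wmr1_weight \<tau> (loc i) P Q)"

end

theory Submission
  imports Defs
begin

text \<open>Write p = d(Z,P), q = d(Z,Q) and f(x) = d(x,P) - d(x,Q) - 2 d(x,Z), so that the claim is
  that the f-values of the voters sum to at most 0. The triangle inequality gives f \<le> p - q for
  every voter and -f \<ge> max 0 (p - q) for every voter preferring P; a weak Q-voter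
  moreover has f \<le> (1 - 1/\<tau>) p, and a strong P-voter has -f \<ge> min 2 (\<tau> - 1) p. A single
  scale c \<ge> 0 can therefore be chosen such that every Q-voter's f is at most c times its weight
  and every P-voter's -f is at least c times its weight. Summing and using that P wins the
  weighted vote yields the claim.\<close>

lemma wmr1_strong_weight_ge_1:
  assumes "\<tau> \<ge> 1"
  shows "wmr1_strong_weight \<tau> \<ge> 1"
proof (cases "\<tau> \<ge> sqrt 2 + 1")
  case True
  then have "\<tau> - 1 > 0"
    using real_sqrt_gt_zero[of 2] by linarith
  then show ?thesis
    using True by (simp add: wmr1_strong_weight_def field_simps)
next
  case False
  then show ?thesis
    using assms by (simp add: wmr1_strong_weight_def)
qed

text \<open>This is the inequality for which the threshold sqrt 2 + 1 is chosen.\<close>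
lemma wmr1_strong_weight_mult_le:
  assumes "\<tau> \<ge> 1"
  shows "wmr1_strong_weight \<tau> * (1 - 1/\<tau>) \<le> min 2 (\<tau> - 1)"
proof (cases "\<tau> \<ge> sqrt 2 + 1")
  case True
  then have "(sqrt 2)\<^sup>2 \<le> (\<tau> - 1)\<^sup>2"
    by (intro power_mono) auto
  then have sq: "2 \<le> (\<tau> - 1)\<^sup>2"
    by simp
  have "\<tau> > 1"
    using True real_sqrt_gt_zero[of 2] by linarith
  then have "wmr1_strong_weight \<tau> * (1 - 1/\<tau>) = (\<tau> + 1) / \<tau>"
    using True by (simp add: wmr1_strong_weight_def field_simps)
  moreover have "(\<tau> + 1) / \<tau> \<le> 2" and "(\<tau> + 1) / \<tau> \<le> \<tau> - 1"
    using assms sq by (simp_all add: field_simps power2_eq_square)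
  ultimately show ?thesis
    by simp
next
  case False
  have "sqrt 2 < 2"
    using real_sqrt_less_iff[of 2 4] by simp
  then have "\<tau> < 3"
    using False by simp
  moreover have "wmr1_strong_weight \<tau> * (1 - 1/\<tau>) = \<tau> - 1"
    using False assms by (simp add: wmr1_strong_weight_def field_simps)
  ultimately show ?thesis
    by simp
qed

lemma dist_le_if_not_strength_gt:
  assumes "\<not> strength x A B > ereal \<tau>" "\<tau> \<ge> 1"
  shows "dist x B \<le> \<tau> * dist x A"
proof (cases "dist x A = 0")
  case True
  then show ?thesis
    using assms by (auto simp: strength_def split: if_splits)
next
  case False
  then have "dist x B / dist x A \<le> \<tau>"
    using assms by (simp add: strength_def)
  then show ?thesis
    using False by (simp add: field_simps)
qed

lemma dist_ge_if_strength_gt: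
  assumes "strength x A B > ereal \<tau>"
  shows "dist x B \<ge> \<tau> * dist x A"
proof (cases "dist x A = 0")
  case False
  then have "dist x B / dist x A > \<tau>"
    using assms by (simp add: strength_def)
  then show ?thesis
    using False by (simp add: field_simps)
qed simp

lemma sum_nonpos_if_weighted_vote_won:
  fixes f u v :: "'i \<Rightarrow> real"
  assumes "finite I" "c \<ge> 0"
    and against: "\<And>i. i \<in> I \<Longrightarrow> \<not> S i \<Longrightarrow> f i \<le> c * u i"
    and favour: "\<And>i. i \<in> I \<Longrightarrow> S i \<Longrightarrow> c * v i \<le> - f i"
    and won: "(\<Sum>i\<in>{i\<in>I. \<not> S i}. u i) \<le> (\<Sum>i\<in>{i\<in>I. S i}. v i)"
  shows "(\<Sum>i\<in>I. f i) \<le> 0"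
proof -
  have "(\<Sum>i\<in>I. f i) = (\<Sum>i\<in>{i\<in>I. \<not> S i}. f i) + (\<Sum>i\<in>{i\<in>I. S i}. f i)"
  proof -
    have "(\<Sum>i\<in>I. f i) = (\<Sum>i\<in>I. (if \<not> S i then f i else 0) + (if S i then f i else 0))"
      by (intro sum.cong) auto
    then show ?thesis
      by (simp only: sum.distrib sum.inter_filter[OF assms(1)])
  qed
  also have "\<dots> \<le> (\<Sum>i\<in>{i\<in>I. \<not> S i}. c * u i) - (\<Sum>i\<in>{i\<in>I. S i}. c * v i)"
    using sum_mono[of "{i\<in>I. \<not> S i}" f "\<lambda>i. c * u i"]
      sum_mono[of "{i\<in>I. S i}" "\<lambda>i. c * v i" "\<lambda>i. - f i"] against favour
    by (simp add: sum_negf)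
  also have "\<dots> = c * ((\<Sum>i\<in>{i\<in>I. \<not> S i}. u i) - (\<Sum>i\<in>{i\<in>I. S i}. v i))"
    by (simp add: sum_distrib_left right_diff_distrib)
  also have "\<dots> \<le> 0"
    using won \<open>c \<ge> 0\<close> by (simp add: mult_nonneg_nonpos)
  finally show ?thesis .
qed

text \<open>The scale c of the proof idea: the least value compatible with the weak Q-voters (the min
  term) and the strong Q-voters (the quotient).\<close>
definition wmr1_scale :: "real \<Rightarrow> 'a::metric_space \<Rightarrow> 'a \<Rightarrow> 'a \<Rightarrow> real" where
  "wmr1_scale \<tau> P Q Z =
     max 0 (max (min (dist Z P - dist Z Q) ((1 - 1/\<tau>) * dist Z P))
                ((dist Z P - dist Z Q) / wmr1_strong_weight \<tau>))"

lemma wmr1_scale_nonneg: "wmr1_scale \<tau> P Q Z \<ge> 0"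
  by (simp add: wmr1_scale_def)

lemma wmr1_scale_le:
  assumes "\<tau> \<ge> 1"
  shows "wmr1_scale \<tau> P Q Z \<le> max 0 (dist Z P - dist Z Q)"
proof -
  have "W \<ge> 1 \<Longrightarrow> (d::real) / W \<le> max 0 d" for d W
    by (cases "d \<ge> 0") (auto simp: divide_le_eq mult_le_cancel_left1 divide_le_0_iff)
  then show ?thesis
    using wmr1_strong_weight_ge_1[OF assms] by (auto simp: wmr1_scale_def)
qed

lemma wmr1_strong_weight_mult_scale_le:
  assumes "\<tau> \<ge> 1"
  shows "wmr1_strong_weight \<tau> * wmr1_scale \<tau> P Q Z
    \<le> max (max 0 (dist Z P - dist Z Q)) (wmr1_strong_weight \<tau> * ((1 - 1/\<tau>) * dist Z P))"
proof -
  let ?W = "wmr1_strong_weight \<tau>" and ?d = "dist Z P - dist Z Q" and ?kp = "(1 - 1/\<tau>) * dist Z P"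
  have W_pos: "?W > 0"
    using wmr1_strong_weight_ge_1[OF assms] by simp
  have "?W * min ?d ?kp \<le> ?W * ?kp"
    using W_pos by (intro mult_left_mono) auto
  moreover have "?W * (?d / ?W) = ?d"
    using W_pos by simp
  moreover have "?W * wmr1_scale \<tau> P Q Z = max 0 (max (?W * min ?d ?kp) (?W * (?d / ?W)))"
    using W_pos by (simp add: wmr1_scale_def max_mult_distrib_left)
  ultimately show ?thesis
    by (simp add: max_def)
qed

lemma wmr1_weighted_scale_ge_against:
  assumes "\<tau> \<ge> 1"
  shows "dist x P - dist x Q - 2 * dist x Z \<le> wmr1_scale \<tau> P Q Z * wmr1_weight \<tau> x Q P"
proof -
  have triangle_P: "dist x P \<le> dist x Z + dist Z P"
    and triangle_Q: "dist Z Q \<le> dist x Z + dist x Q"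
    by (metis dist_commute dist_triangle)+
  then have le_diff: "dist x P - dist x Q - 2 * dist x Z \<le> dist Z P - dist Z Q"
    by simp
  show ?thesis
  proof (cases "strength x Q P > ereal \<tau>")
    case True
    have W_pos: "wmr1_strong_weight \<tau> > 0"
      using wmr1_strong_weight_ge_1[OF assms(1)] by simp
    have "(dist Z P - dist Z Q) / wmr1_strong_weight \<tau> \<le> wmr1_scale \<tau> P Q Z"
      by (simp add: wmr1_scale_def)
    then have "dist Z P - dist Z Q \<le> wmr1_scale \<tau> P Q Z * wmr1_strong_weight \<tau>"
      using W_pos by (simp add: divide_le_eq)
    then show ?thesis
      using True le_diff by (simp add: wmr1_weight_def)
  next
    case False
    have k: "0 \<le> 1 - 1/\<tau>" "1 - 1/\<tau> \<le> 2"
      using assms(1) by (simp_all add: field_simps)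
    have "dist x P \<le> \<tau> * dist x Q"
      using dist_le_if_not_strength_gt[OF False assms(1)] .
    then have "dist x P - dist x Q \<le> (1 - 1/\<tau>) * dist x P"
      using assms(1) by (simp add: field_simps)
    also have "\<dots> \<le> (1 - 1/\<tau>) * (dist x Z + dist Z P)"
      using triangle_P k by (intro mult_left_mono) auto
    also have "\<dots> \<le> 2 * dist x Z + (1 - 1/\<tau>) * dist Z P"
      using mult_right_mono[OF k(2) zero_le_dist[of x Z]] by (simp add: distrib_left)
    finally have "dist x P - dist x Q - 2 * dist x Z \<le> (1 - 1/\<tau>) * dist Z P"
      by simp
    with le_diff have "dist x P - dist x Q - 2 * dist x Z \<le> wmr1_scale \<tau> P Q Z"
      unfolding wmr1_scale_def by linarith
    then show ?thesis
      using False by (simp add: wmr1_weight_def)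
  qed
qed

lemma wmr1_weighted_scale_le_favour:
  assumes "\<tau> \<ge> 1" and prefers_P: "dist x P \<le> dist x Q"
  shows "wmr1_scale \<tau> P Q Z * wmr1_weight \<tau> x P Q \<le> dist x Q - dist x P + 2 * dist x Z"
proof -
  have triangle_P: "dist Z P \<le> dist x Z + dist x P"
    and triangle_Q: "dist x Q \<le> dist x Z + dist Z Q"
    by (metis dist_commute dist_triangle)+
  then have ge_max: "max 0 (dist Z P - dist Z Q) \<le> dist x Q - dist x P + 2 * dist x Z"
    using prefers_P zero_le_dist[of x Z] by simp
  show ?thesis
  proof (cases "strength x P Q > ereal \<tau>")
    case True
    let ?m = "min 2 (\<tau> - 1)"
    have "\<tau> * dist x P \<le> dist x Q"
      using dist_ge_if_strength_gt[OF True] .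
    then have "2 * dist x Z + (\<tau> - 1) * dist x P \<le> dist x Q - dist x P + 2 * dist x Z"
      by (simp add: algebra_simps)
    moreover have "?m * (dist x Z + dist x P) \<le> 2 * dist x Z + (\<tau> - 1) * dist x P"
      using assms(1) by (simp add: min_def distrib_left mult_right_mono)
    moreover have "?m * dist Z P \<le> ?m * (dist x Z + dist x P)"
      using triangle_P assms(1) by (intro mult_left_mono) auto
    moreover have "wmr1_strong_weight \<tau> * ((1 - 1/\<tau>) * dist Z P) \<le> ?m * dist Z P"
      using wmr1_strong_weight_mult_le[OF assms(1)]
      by (metis mult.assoc mult_right_mono zero_le_dist)
    ultimately have "wmr1_strong_weight \<tau> * ((1 - 1/\<tau>) * dist Z P)
        \<le> dist x Q - dist x P + 2 * dist x Z"
      by linarith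
    with ge_max have "wmr1_strong_weight \<tau> * wmr1_scale \<tau> P Q Z
        \<le> dist x Q - dist x P + 2 * dist x Z"
      using wmr1_strong_weight_mult_scale_le[OF assms(1), of P Q Z] by linarith
    then show ?thesis
      using True by (simp add: wmr1_weight_def mult.commute)
  next
    case False
    then show ?thesis
      using order_trans[OF wmr1_scale_le[OF assms(1)] ge_max] by (simp add: wmr1_weight_def)
  qed
qed

theorem mainTheorem5:
  fixes \<tau> :: real and n :: nat and loc :: "nat \<Rightarrow> 'a::metric_space"
    and prefP :: "nat \<Rightarrow> bool" and P Q :: 'a
  assumes "\<tau> \<ge> 1"
    and "consistent_profile n loc prefP P Q"
    and "wmr1_selects \<tau> n loc prefP P Q"
  shows "\<forall>Z. SC n loc P \<le> SC n loc Q + 2 * SC n loc Z"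
proof
  fix Z
  let ?f = "\<lambda>i. dist (loc i) P - dist (loc i) Q - 2 * dist (loc i) Z"
  have "(\<Sum>i\<in>{1..n}. ?f i) \<le> 0"
  proof (rule sum_nonpos_if_weighted_vote_won[OF _ wmr1_scale_nonneg[of \<tau> P Q Z]])
    fix i assume "i \<in> {1..n}"
    then have "prefP i \<Longrightarrow> dist (loc i) P \<le> dist (loc i) Q"
      using assms(2) by (simp add: consistent_profile_def)
    then show "\<not> prefP i \<Longrightarrow> ?f i \<le> wmr1_scale \<tau> P Q Z * wmr1_weight \<tau> (loc i) Q P"
      and "prefP i \<Longrightarrow> wmr1_scale \<tau> P Q Z * wmr1_weight \<tau> (loc i) P Q \<le> - ?f i"
      using wmr1_weighted_scale_ge_against[OF assms(1), of "loc i" P Q Z]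
        wmr1_weighted_scale_le_favour[OF assms(1), of "loc i" P Q Z]
      by simp_all
  qed (use assms(3) in \<open>simp_all add: wmr1_selects_def\<close>)
  then show "SC n loc P \<le> SC n loc Q + 2 * SC n loc Z"
    by (simp add: SC_def sum_subtractf sum_distrib_left)
qed

end
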